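(* Let $d \ge 1$. There exists a ReLU network $f:\mathbb{R}^d\to\mathbb{R}$ with $d$ inputs, one hidden layer of $d$ ReLU neurons, and one output, i.e. a function of the form $f(z) = c_0 + \sum_{k=1}^{d} c_k\,\mathrm{ReLU}(w_k^\top z + b_k)$ with $c_k, b_k \in \mathbb{R}$, $w_k\in\mathbb{R}^d$, such that for all $x \in \mathbb{R}^d$ and all $\xi \in \mathbb{R}$, $$f(x - \xi 1_d) \le 0 \iff \max\{x_1,\dots,x_d\} \le \xi,$$ where $1_d$ is the all-ones vector in $\mathbb{R}^d$.
   Context: $\mathrm{ReLU}(t)=\max(t,0)$. The expression $x-\xi$ in the paper denotes subtracting the scalar $\xi$ from every coordinate of $x$, written here as $x-\xi 1_d$. *)

theory Defs
  imports "HOL-Analysis.Analysis"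
begin

definition ReLU :: "real \<Rightarrow> real" where
  "ReLU t = max t 0"

end

theory Submission
  imports Defs
begin

text \<open>With unit output weights, zero biases and the coordinate projections as input weights,
  the network computes \<open>\<Sum>\<^sub>k ReLU (x\<^sub>k - \<xi>)\<close>. This is a sum of nonnegative terms, so it is
  \<open>\<le> 0\<close> exactly when every term vanishes, i.e. when every \<open>x\<^sub>k \<le> \<xi>\<close>.\<close>

lemma ReLU_nonneg: "0 \<le> ReLU t"
  by (simp add: ReLU_def)

lemma ReLU_eq_0_iff: "ReLU t = 0 \<longleftrightarrow> t \<le> 0"
  by (simp add: ReLU_def max_def)

lemma sum_ReLU_nonpos_iff:
  assumes "finite A"
  shows "(\<Sum>k\<in>A. ReLU (f k)) \<le> 0 \<longleftrightarrow> (\<forall>k\<in>A. f k \<le> 0)"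
proof -
  have "(\<Sum>k\<in>A. ReLU (f k)) \<le> 0 \<longleftrightarrow> (\<Sum>k\<in>A. ReLU (f k)) = 0"
    using sum_nonneg[of A "\<lambda>k. ReLU (f k)"] by (auto simp: ReLU_nonneg)
  also have "\<dots> \<longleftrightarrow> (\<forall>k\<in>A. ReLU (f k) = 0)"
    using assms by (simp add: sum_nonneg_eq_0_iff ReLU_nonneg)
  finally show ?thesis
    by (simp add: ReLU_eq_0_iff)
qed

lemma Max_range_le_iff:
  fixes f :: "'a::finite \<Rightarrow> 'b::linorder"
  shows "Max (range f) \<le> a \<longleftrightarrow> (\<forall>i. f i \<le> a)"
  by (simp add: Max_le_iff)

lemma sum_ReLU_shift_nonpos_iff_Max_le:
  fixes x :: "real^'n"
  shows "(\<Sum>k\<in>UNIV. ReLU (x $ k - \<xi>)) \<le> 0 \<longleftrightarrow> Max (range (\<lambda>i. x $ i)) \<le> \<xi>"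
  by (simp add: sum_ReLU_nonpos_iff Max_range_le_iff)

lemma axis_inner_shift:
  fixes x :: "real^'n"
  shows "axis k 1 \<bullet> (x - \<xi> *\<^sub>R (\<chi> i. 1)) = x $ k - \<xi>"
  by (simp add: inner_axis' inner_diff_right)

theorem theorem1:
  shows "\<exists>(c0::real) (c::real^'n) (b::real^'n) (w::real^'n^'n).
     \<forall>(x::real^'n) (\<xi>::real).
       (c0 + (\<Sum>k\<in>UNIV. c $ k * ReLU (w $ k \<bullet> (x - \<xi> *\<^sub>R (\<chi> i. 1)) + b $ k)) \<le> 0)
       \<longleftrightarrow> Max (range (\<lambda>i. x $ i)) \<le> \<xi>"
proof (intro exI allI)
  fix x :: "real^'n" and \<xi> :: real
  show "(0 + (\<Sum>k\<in>UNIV. (\<chi> k. 1) $ k * ReLU ((\<chi> k. axis k 1) $ k \<bullet> (x - \<xi> *\<^sub>R (\<chi> i. 1)) + 0 $ k)) \<le> 0)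
    \<longleftrightarrow> Max (range (\<lambda>i. x $ i)) \<le> \<xi>"
    by (simp only: vec_lambda_beta zero_index axis_inner_shift mult_1 add_0 add_0_right
        sum_ReLU_shift_nonpos_iff_Max_le)
qed

end
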